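(* Let $U$ be a finite set, $(T,I,N)$ an IMTL triplet, $\widetilde{R}$ a $T$-preorder relation on $U$, $A\subseteq U$ a crisp set with $A\neq\emptyset$ and $coA=U\setminus A\neq\emptyset$ (identified with the fuzzy set $A(u)=1$ for $u\in A$, $A(u)=0$ otherwise), and $L:\mathbb{R}\times\mathbb{R}\to\mathbb{R}^+$ a loss function of $\lor$-type. Let $\hat{A}:U\to[0,1]$ be an optimal solution of $$\text{minimize }\sum_{u\in U}L(A(u),\hat{A}(u))\quad\text{subject to } T(\widetilde{R}(u,v),\hat{A}(v))\le\hat{A}(u)\ (u,v\in U),\quad 0\le\hat{A}(u)\le1\ (u\in U).$$ Then: for every $u\in A$ there is $v\in coA$ such that $\widetilde{R}^-_{N(\hat{A}(v))}(v)$ is adjacent to $\widetilde{R}^+_{\hat{A}(u)}(u)$; and for every $u\in coA$ there is $v\in A$ such that $\widetilde{R}^+_{\hat{A}(v)}(v)$ is adjacent to $\widetilde{R}^-_{N(\hat{A}(u))}(u)$.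
   Context: A residual triplet $(T,I,N)$ consists of a left-continuous $t$-norm $T$, its residual implicator $I(x,y)=\sup\{\beta\in[0,1]: T(x,\beta)\le y\}$ and $N(x)=I(x,0)$; it is IMTL if $N$ is involutive. $\widetilde{R}:U\times U\to[0,1]$ is a $T$-preorder if reflexive and $T$-transitive. Granules: $\widetilde{R}^+_\lambda(u)$ is the fuzzy set $w\mapsto T(\widetilde{R}(w,u),\lambda)$ and $\widetilde{R}^-_\lambda(v)$ is $w\mapsto T(\widetilde{R}(v,w),\lambda)$. Adjacency: for $x,y\in U$, $\widetilde{R}^-_{\lambda_2}(y)$ is adjacent to $\widetilde{R}^+_{\lambda_1}(x)$ if $\lambda_1=I(\lambda_2,N(\widetilde{R}(y,x)))$; $\widetilde{R}^+_{\lambda_1}(x)$ is adjacent to $\widetilde{R}^-_{\lambda_2}(y)$ if $\lambda_2=I(\lambda_1,N(\widetilde{R}(y,x)))$. A loss function $L$ is of $\lor$-type if for every real $a$: $L(a,a)=0$; $x\mapsto L(x,a)$ and $x\mapsto L(a,x)$ are increasing for $x>a$ and decreasing for $x<a$. *)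

theory Defs
  imports "HOL-Analysis.Analysis"
begin

definition is_tnorm :: "(real \<Rightarrow> real \<Rightarrow> real) \<Rightarrow> bool" where
  "is_tnorm T \<longleftrightarrow>
     (\<forall>x\<in>{0..1}. \<forall>y\<in>{0..1}. T x y \<in> {0..1}) \<and>
     (\<forall>x\<in>{0..1}. \<forall>y\<in>{0..1}. T x y = T y x) \<and>
     (\<forall>x\<in>{0..1}. \<forall>y\<in>{0..1}. \<forall>z\<in>{0..1}. T (T x y) z = T x (T y z)) \<and>
     (\<forall>x\<in>{0..1}. \<forall>x'\<in>{0..1}. \<forall>y\<in>{0..1}. x \<le> x' \<longrightarrow> T x y \<le> T x' y) \<and>
     (\<forall>x\<in>{0..1}. T x 1 = x)"

definition left_continuous_tnorm :: "(real \<Rightarrow> real \<Rightarrow> real) \<Rightarrow> bool" where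
  "left_continuous_tnorm T \<longleftrightarrow> is_tnorm T \<and>
     (\<forall>y\<in>{0..1}. \<forall>x\<in>{0<..1}. continuous (at_left x) (\<lambda>z. T z y))"

definition resid :: "(real \<Rightarrow> real \<Rightarrow> real) \<Rightarrow> real \<Rightarrow> real \<Rightarrow> real" where
  "resid T x y = Sup {b. 0 \<le> b \<and> b \<le> 1 \<and> T x b \<le> y}"

definition rneg :: "(real \<Rightarrow> real \<Rightarrow> real) \<Rightarrow> real \<Rightarrow> real" where
  "rneg T x = resid T x 0"

text \<open>(T,I,N) is an IMTL residual triplet: T left-continuous and N involutive.\<close>
definition IMTL :: "(real \<Rightarrow> real \<Rightarrow> real) \<Rightarrow> bool" where
  "IMTL T \<longleftrightarrow> left_continuous_tnorm T \<and> (\<forall>x\<in>{0..1}. rneg T (rneg T x) = x)"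

definition T_preorder :: "(real \<Rightarrow> real \<Rightarrow> real) \<Rightarrow> 'a set \<Rightarrow> ('a \<Rightarrow> 'a \<Rightarrow> real) \<Rightarrow> bool" where
  "T_preorder T U R \<longleftrightarrow>
     (\<forall>u\<in>U. \<forall>v\<in>U. 0 \<le> R u v \<and> R u v \<le> 1) \<and>
     (\<forall>u\<in>U. R u u = 1) \<and>
     (\<forall>u\<in>U. \<forall>v\<in>U. \<forall>w\<in>U. T (R u v) (R v w) \<le> R u w)"

definition granule_plus :: "(real \<Rightarrow> real \<Rightarrow> real) \<Rightarrow> ('a \<Rightarrow> 'a \<Rightarrow> real) \<Rightarrow> real \<Rightarrow> 'a \<Rightarrow> 'a \<Rightarrow> real" where
  "granule_plus T R l u = (\<lambda>w. T (R w u) l)"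

definition granule_minus :: "(real \<Rightarrow> real \<Rightarrow> real) \<Rightarrow> ('a \<Rightarrow> 'a \<Rightarrow> real) \<Rightarrow> real \<Rightarrow> 'a \<Rightarrow> 'a \<Rightarrow> real" where
  "granule_minus T R l v = (\<lambda>w. T (R v w) l)"

text \<open>Adjacency, defined on the parameters of the granules as in the paper:
  adj_minus_to_plus T R y l2 x l1: R^-_{l2}(y) is adjacent to R^+_{l1}(x);
  adj_plus_to_minus T R x l1 y l2: R^+_{l1}(x) is adjacent to R^-_{l2}(y).\<close>
definition adj_minus_to_plus :: "(real \<Rightarrow> real \<Rightarrow> real) \<Rightarrow> ('a \<Rightarrow> 'a \<Rightarrow> real) \<Rightarrow> 'a \<Rightarrow> real \<Rightarrow> 'a \<Rightarrow> real \<Rightarrow> bool" where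
  "adj_minus_to_plus T R y l2 x l1 \<longleftrightarrow> l1 = resid T l2 (rneg T (R y x))"

definition adj_plus_to_minus :: "(real \<Rightarrow> real \<Rightarrow> real) \<Rightarrow> ('a \<Rightarrow> 'a \<Rightarrow> real) \<Rightarrow> 'a \<Rightarrow> real \<Rightarrow> 'a \<Rightarrow> real \<Rightarrow> bool" where
  "adj_plus_to_minus T R x l1 y l2 \<longleftrightarrow> l2 = resid T l1 (rneg T (R y x))"

text \<open>Loss function of join-type, with values in R+ (nonnegative); monotonicity read strictly.\<close>
definition vee_type_loss :: "(real \<Rightarrow> real \<Rightarrow> real) \<Rightarrow> bool" where
  "vee_type_loss L \<longleftrightarrow>
     (\<forall>x y. 0 \<le> L x y) \<and>
     (\<forall>a. L a a = 0 \<and>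
        (\<forall>x y. a < x \<longrightarrow> x < y \<longrightarrow> L x a < L y a \<and> L a x < L a y) \<and>
        (\<forall>x y. x < y \<longrightarrow> y < a \<longrightarrow> L y a < L x a \<and> L a y < L a x))"

definition crisp :: "'a set \<Rightarrow> 'a \<Rightarrow> real" where
  "crisp A u = (if u \<in> A then 1 else 0)"

definition feasible :: "(real \<Rightarrow> real \<Rightarrow> real) \<Rightarrow> 'a set \<Rightarrow> ('a \<Rightarrow> 'a \<Rightarrow> real) \<Rightarrow> ('a \<Rightarrow> real) \<Rightarrow> bool" where
  "feasible T U R h \<longleftrightarrow>
     (\<forall>u\<in>U. \<forall>v\<in>U. T (R u v) (h v) \<le> h u) \<and> (\<forall>u\<in>U. 0 \<le> h u \<and> h u \<le> 1)"

definition optimal_solution :: "(real \<Rightarrow> real \<Rightarrow> real) \<Rightarrow> 'a set \<Rightarrow> ('a \<Rightarrow> 'a \<Rightarrow> real)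
    \<Rightarrow> (real \<Rightarrow> real \<Rightarrow> real) \<Rightarrow> 'a set \<Rightarrow> ('a \<Rightarrow> real) \<Rightarrow> bool" where
  "optimal_solution T U R L A h \<longleftrightarrow> feasible T U R h \<and>
     (\<forall>g. feasible T U R g \<longrightarrow> (\<Sum>u\<in>U. L (crisp A u) (h u)) \<le> (\<Sum>u\<in>U. L (crisp A u) (g u)))"

end

theory Submission
  imports Defs
begin

text \<open>
  Feasible solutions are closed under pointwise maximum, and each granule R+_l(u) is feasible
  by T-transitivity. Suppose u \<in> A but no constraint T(R(v,u), N(Ah v)) \<le> N(Ah u) with
  v \<in> coA is tight. With l = N(max_v T(R(v,u), N(Ah v))) > Ah u, the solution max(Ah, R+_l(u))
  is feasible, agrees with Ah on coA and is strictly closer to 1 at u, contradicting optimality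
  for a join-type loss. A tight constraint is exactly adjacency of the two granules, since
  I(x, N y) = N(T(x,y)) in an IMTL triplet. The case u \<in> coA is the same argument for the
  converse relation and N \<circ> Ah, which is feasible for it by the contraposition law
  T(x,y) \<le> z \<longleftrightarrow> T(x, N z) \<le> N y.
\<close>

lemma tnorm_range:
  assumes "is_tnorm T" "x \<in> {0..1}" "y \<in> {0..1}"
  shows "T x y \<in> {0..1}"
  using assms unfolding is_tnorm_def by blast

lemma tnorm_commute:
  assumes "is_tnorm T" "x \<in> {0..1}" "y \<in> {0..1}"
  shows "T x y = T y x"
  using assms unfolding is_tnorm_def by blast

lemma tnorm_assoc:
  assumes "is_tnorm T" "x \<in> {0..1}" "y \<in> {0..1}" "z \<in> {0..1}"
  shows "T (T x y) z = T x (T y z)"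
  using assms unfolding is_tnorm_def by blast

lemma tnorm_mono_left:
  assumes "is_tnorm T" "x \<in> {0..1}" "x' \<in> {0..1}" "y \<in> {0..1}" "x \<le> x'"
  shows "T x y \<le> T x' y"
  using assms unfolding is_tnorm_def by blast

lemma tnorm_mono_right:
  assumes "is_tnorm T" "x \<in> {0..1}" "y \<in> {0..1}" "y' \<in> {0..1}" "y \<le> y'"
  shows "T x y \<le> T x y'"
  using tnorm_mono_left[OF assms(1,3,4,2,5)] tnorm_commute[OF assms(1)] assms(2-4) by metis

lemma tnorm_one_right:
  assumes "is_tnorm T" "x \<in> {0..1}"
  shows "T x 1 = x"
  using assms unfolding is_tnorm_def by blast

lemma tnorm_one_left:
  assumes "is_tnorm T" "x \<in> {0..1}"
  shows "T 1 x = x"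
  using tnorm_commute[OF assms(1), of 1 x] tnorm_one_right[OF assms] assms(2) by simp

lemma tnorm_zero_right:
  assumes "is_tnorm T" "x \<in> {0..1}"
  shows "T x 0 = 0"
proof -
  have "T x 0 \<le> T 1 0"
    using tnorm_mono_left[OF assms(1)] assms(2) by simp
  then show ?thesis
    using tnorm_one_left[OF assms(1), of 0] tnorm_range[OF assms, of 0] by simp
qed

lemma left_continuous_tnorm_is_tnorm: "left_continuous_tnorm T \<Longrightarrow> is_tnorm T"
  unfolding left_continuous_tnorm_def by blast

lemma IMTL_left_continuous: "IMTL T \<Longrightarrow> left_continuous_tnorm T"
  unfolding IMTL_def by blast

lemma IMTL_is_tnorm: "IMTL T \<Longrightarrow> is_tnorm T"
  by (simp add: IMTL_left_continuous left_continuous_tnorm_is_tnorm)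

lemma resid_set_nonempty_bdd_above:
  assumes "is_tnorm T" "x \<in> {0..1}" "y \<in> {0..1}"
  shows "0 \<in> {b. 0 \<le> b \<and> b \<le> 1 \<and> T x b \<le> y}"
    and "bdd_above {b. 0 \<le> b \<and> b \<le> 1 \<and> T x b \<le> y}"
proof -
  show "0 \<in> {b. 0 \<le> b \<and> b \<le> 1 \<and> T x b \<le> y}"
    using tnorm_zero_right[OF assms(1,2)] assms(3) by simp
  show "bdd_above {b. 0 \<le> b \<and> b \<le> 1 \<and> T x b \<le> y}"
    by (rule bdd_aboveI[where M = 1]) simp
qed

lemma resid_range:
  assumes "is_tnorm T" "x \<in> {0..1}" "y \<in> {0..1}"
  shows "resid T x y \<in> {0..1}"
proof -
  note S = resid_set_nonempty_bdd_above[OF assms]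
  have "0 \<le> resid T x y"
    unfolding resid_def using cSup_upper[OF S] .
  moreover have "resid T x y \<le> 1"
    unfolding resid_def by (rule cSup_least) (use S(1) in blast, simp)
  ultimately show ?thesis
    by simp
qed

lemma tnorm_resid_le:
  assumes "left_continuous_tnorm T" "x \<in> {0..1}" "y \<in> {0..1}"
  shows "T x (resid T x y) \<le> y"
proof -
  let ?S = "{b. 0 \<le> b \<and> b \<le> 1 \<and> T x b \<le> y}"
  have T: "is_tnorm T"
    using assms(1) by (rule left_continuous_tnorm_is_tnorm)
  define c where "c = resid T x y"
  have c: "c \<in> {0..1}"
    unfolding c_def using resid_range[OF T assms(2,3)] .
  have below_c: "T z x \<le> y" if "z \<in> {0<..<c}" for z
  proof -
    have "z < Sup ?S"
      using that unfolding c_def resid_def by simp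
    then obtain b where b: "b \<in> ?S" "z < b"
      using less_cSup_iff[OF _ resid_set_nonempty_bdd_above(2)[OF T assms(2,3)]] resid_set_nonempty_bdd_above(1)[OF T assms(2,3)]
      by blast
    then have "T x z \<le> T x b"
      using tnorm_mono_right[OF T assms(2)] that by auto
    then show ?thesis
      using b tnorm_commute[OF T assms(2), of z] that c by auto
  qed
  show ?thesis
  proof (cases "c = 0")
    case True
    then show ?thesis
      using tnorm_zero_right[OF T assms(2)] assms(3) c_def by simp
  next
    case False
    then have "c \<in> {0<..1}"
      using c by auto
    then have "((\<lambda>z. T z x) \<longlongrightarrow> T c x) (at_left c)"
      using assms(1,2) unfolding left_continuous_tnorm_def continuous_within by blast
    moreover have "\<forall>\<^sub>F z in at_left c. T z x \<le> y"
      using eventually_at_left_real[OF \<open>c \<in> {0<..1}\<close>[unfolded greaterThanAtMost_iff, THEN conjunct1]]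
      by (rule eventually_mono) (use below_c in blast)
    ultimately have "T c x \<le> y"
      by (rule tendsto_upperbound) (rule trivial_limit_at_left_real)
    then show ?thesis
      using tnorm_commute[OF T assms(2) c] c_def by simp
  qed
qed

lemma resid_adjoint:
  assumes "left_continuous_tnorm T" "x \<in> {0..1}" "y \<in> {0..1}" "b \<in> {0..1}"
  shows "T x b \<le> y \<longleftrightarrow> b \<le> resid T x y"
proof
  assume "T x b \<le> y"
  then show "b \<le> resid T x y"
    unfolding resid_def using assms(4)
    by (intro cSup_upper resid_set_nonempty_bdd_above(2)[OF left_continuous_tnorm_is_tnorm[OF assms(1)] assms(2,3)]) auto
next
  have T: "is_tnorm T"
    using assms(1) by (rule left_continuous_tnorm_is_tnorm)
  assume "b \<le> resid T x y"
  then have "T x b \<le> T x (resid T x y)"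
    using tnorm_mono_right[OF T assms(2,4) resid_range[OF T assms(2,3)]] by blast
  also have "\<dots> \<le> y"
    using tnorm_resid_le[OF assms(1-3)] .
  finally show "T x b \<le> y" .
qed

lemma rneg_range:
  assumes "is_tnorm T" "a \<in> {0..1}"
  shows "rneg T a \<in> {0..1}"
  unfolding rneg_def using resid_range[OF assms] by simp

lemma tnorm_le_zero_iff:
  assumes "left_continuous_tnorm T" "a \<in> {0..1}" "b \<in> {0..1}"
  shows "T a b \<le> 0 \<longleftrightarrow> b \<le> rneg T a"
  unfolding rneg_def using resid_adjoint[OF assms(1,2) _ assms(3), of 0] by simp

lemma le_rneg_commute:
  assumes "left_continuous_tnorm T" "a \<in> {0..1}" "b \<in> {0..1}"
  shows "b \<le> rneg T a \<longleftrightarrow> a \<le> rneg T b"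
  using tnorm_le_zero_iff[OF assms] tnorm_le_zero_iff[OF assms(1,3,2)]
    tnorm_commute[OF left_continuous_tnorm_is_tnorm[OF assms(1)] assms(2,3)] by simp

lemma rneg_rneg:
  assumes "IMTL T" "a \<in> {0..1}"
  shows "rneg T (rneg T a) = a"
  using assms unfolding IMTL_def by blast

lemma rneg_le_rneg_iff:
  assumes "IMTL T" "a \<in> {0..1}" "b \<in> {0..1}"
  shows "rneg T b \<le> rneg T a \<longleftrightarrow> a \<le> b"
proof -
  have LC: "left_continuous_tnorm T"
    using assms(1) by (rule IMTL_left_continuous)
  have "rneg T b \<in> {0..1}"
    using rneg_range[OF left_continuous_tnorm_is_tnorm[OF LC] assms(3)] .
  then show ?thesis
    using le_rneg_commute[OF LC assms(2)] rneg_rneg[OF assms(1,3)] by simp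
qed

lemma tnorm_le_iff_rneg:
  assumes "IMTL T" "x \<in> {0..1}" "y \<in> {0..1}" "z \<in> {0..1}"
  shows "T x y \<le> z \<longleftrightarrow> T x (rneg T z) \<le> rneg T y"
proof -
  have LC: "left_continuous_tnorm T" and T: "is_tnorm T"
    using assms(1) by (simp_all add: IMTL_left_continuous IMTL_is_tnorm)
  have r: "T x y \<in> {0..1}" "rneg T z \<in> {0..1}" "T x (rneg T z) \<in> {0..1}"
    using tnorm_range[OF T] rneg_range[OF T] assms(2-4) by auto
  have "T x y \<le> z \<longleftrightarrow> rneg T z \<le> rneg T (T x y)"
    using le_rneg_commute[OF LC r(1,2)] rneg_rneg[OF assms(1,4)] by simp
  also have "\<dots> \<longleftrightarrow> T (T x y) (rneg T z) \<le> 0"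
    using tnorm_le_zero_iff[OF LC r(1,2)] by simp
  also have "T (T x y) (rneg T z) = T (T x (rneg T z)) y"
    using tnorm_assoc[OF T] tnorm_commute[OF T] assms(2-4) r(2) by metis
  also have "\<dots> \<le> 0 \<longleftrightarrow> y \<le> rneg T (T x (rneg T z))"
    using tnorm_le_zero_iff[OF LC r(3) assms(3)] .
  also have "\<dots> \<longleftrightarrow> T x (rneg T z) \<le> rneg T y"
    using le_rneg_commute[OF LC r(3) assms(3)] .
  finally show ?thesis .
qed

lemma resid_rneg:
  assumes "IMTL T" "x \<in> {0..1}" "y \<in> {0..1}"
  shows "resid T x (rneg T y) = rneg T (T x y)"
proof -
  have LC: "left_continuous_tnorm T" and T: "is_tnorm T"
    using assms(1) by (simp_all add: IMTL_left_continuous IMTL_is_tnorm)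
  have r: "T x y \<in> {0..1}" "rneg T y \<in> {0..1}"
    using tnorm_range[OF T] rneg_range[OF T] assms(2,3) by auto
  have iff: "b \<le> resid T x (rneg T y) \<longleftrightarrow> b \<le> rneg T (T x y)" if b: "b \<in> {0..1}" for b
  proof -
    have Txb: "T x b \<in> {0..1}"
      using tnorm_range[OF T assms(2) b] .
    have "b \<le> resid T x (rneg T y) \<longleftrightarrow> T x b \<le> rneg T y"
      using resid_adjoint[OF LC assms(2) r(2) b] by simp
    also have "\<dots> \<longleftrightarrow> T (T x b) y \<le> 0"
      using tnorm_le_zero_iff[OF LC Txb assms(3)] le_rneg_commute[OF LC Txb assms(3)] by simp
    also have "T (T x b) y = T (T x y) b"
      using tnorm_assoc[OF T] tnorm_commute[OF T] assms(2,3) b by metis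
    also have "\<dots> \<le> 0 \<longleftrightarrow> b \<le> rneg T (T x y)"
      using tnorm_le_zero_iff[OF LC r(1) b] .
    finally show ?thesis .
  qed
  show ?thesis
    using iff[OF resid_range[OF T assms(2) r(2)]] iff[OF rneg_range[OF T r(1)]] by simp
qed

lemma T_preorder_converse:
  assumes "is_tnorm T" "T_preorder T U R"
  shows "T_preorder T U (\<lambda>u v. R v u)"
  unfolding T_preorder_def
proof (intro conjI ballI)
  fix u v w assume uvw: "u \<in> U" "v \<in> U" "w \<in> U"
  have "T (R v u) (R w v) = T (R w v) (R v u)"
    using assms(2) uvw by (intro tnorm_commute[OF assms(1)]) (auto simp: T_preorder_def)
  also have "\<dots> \<le> R w u"
    using assms(2) uvw unfolding T_preorder_def by blast
  finally show "T (R v u) (R w v) \<le> R w u" .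
qed (use assms(2) in \<open>auto simp: T_preorder_def\<close>)

lemma feasible_converse_rneg:
  assumes "IMTL T" "T_preorder T U R" "feasible T U R h"
  shows "feasible T U (\<lambda>u v. R v u) (\<lambda>u. rneg T (h u))"
  unfolding feasible_def
proof (intro conjI ballI)
  fix u v assume uv: "u \<in> U" "v \<in> U"
  have r: "R v u \<in> {0..1}" "h u \<in> {0..1}" "h v \<in> {0..1}"
    using assms(2,3) uv unfolding T_preorder_def feasible_def by auto
  have "T (R v u) (h u) \<le> h v"
    using assms(3) uv unfolding feasible_def by blast
  then show "T (R v u) (rneg T (h v)) \<le> rneg T (h u)"
    using tnorm_le_iff_rneg[OF assms(1) r] by simp
next
  fix u assume "u \<in> U"
  then show "0 \<le> rneg T (h u)" "rneg T (h u) \<le> 1"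
    using rneg_range[OF IMTL_is_tnorm[OF assms(1)], of "h u"] assms(3)
    unfolding feasible_def by auto
qed

lemma feasible_granule_plus:
  assumes "is_tnorm T" "T_preorder T U R" "u \<in> U" "l \<in> {0..1}"
  shows "feasible T U R (granule_plus T R l u)"
  unfolding feasible_def granule_plus_def
proof (intro conjI ballI)
  fix w w' assume w: "w \<in> U" "w' \<in> U"
  have r: "R w w' \<in> {0..1}" "R w' u \<in> {0..1}" "R w u \<in> {0..1}"
    using assms(2,3) w unfolding T_preorder_def by auto
  have "T (R w w') (T (R w' u) l) = T (T (R w w') (R w' u)) l"
    using tnorm_assoc[OF assms(1) r(1,2) assms(4)] by simp
  also have "\<dots> \<le> T (R w u) l"
    using assms(2,3) w unfolding T_preorder_def
    by (intro tnorm_mono_left[OF assms(1) tnorm_range[OF assms(1) r(1,2)] r(3) assms(4)]) blast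
  finally show "T (R w w') (T (R w' u) l) \<le> T (R w u) l" .
next
  fix w assume "w \<in> U"
  then have "R w u \<in> {0..1}"
    using assms(2,3) unfolding T_preorder_def by auto
  then show "0 \<le> T (R w u) l" "T (R w u) l \<le> 1"
    using tnorm_range[OF assms(1) _ assms(4)] by auto
qed

lemma feasible_max:
  assumes "feasible T U R g" "feasible T U R h"
  shows "feasible T U R (\<lambda>w. max (g w) (h w))"
  unfolding feasible_def
proof (intro conjI ballI)
  fix w w' assume w: "w \<in> U" "w' \<in> U"
  have "T (R w w') (g w') \<le> g w" "T (R w w') (h w') \<le> h w"
    using assms w unfolding feasible_def by blast+
  then show "T (R w w') (max (g w') (h w')) \<le> max (g w) (h w)"
    by (cases "g w' \<le> h w'") (auto simp: max_def)
next
  fix w assume "w \<in> U"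
  then show "0 \<le> max (g w) (h w)" "max (g w) (h w) \<le> 1"
    using assms unfolding feasible_def by auto
qed

lemma feasible_raise_outside:
  assumes "IMTL T" "T_preorder T U R" "feasible T U R h"
    and "finite B" "B \<subseteq> U" "B \<noteq> {}" "u \<in> U"
    and below: "\<forall>v\<in>B. T (R v u) (rneg T (h v)) < rneg T (h u)"
  obtains g where "feasible T U R g" "\<forall>w\<in>U. h w \<le> g w" "\<forall>v\<in>B. g v = h v" "h u < g u"
proof -
  have T: "is_tnorm T"
    using assms(1) by (rule IMTL_is_tnorm)
  have R: "\<forall>v\<in>U. \<forall>w\<in>U. R v w \<in> {0..1}" "R u u = 1"
    using assms(2,7) unfolding T_preorder_def by auto
  have h: "\<forall>v\<in>U. h v \<in> {0..1}"
    using assms(3) unfolding feasible_def by auto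
  define m where "m = (MAX v\<in>B. T (R v u) (rneg T (h v)))"
  have m_attained: "m \<in> (\<lambda>v. T (R v u) (rneg T (h v))) ` B"
    unfolding m_def using assms(4,6) by (intro Max_in) auto
  have m_upper: "T (R v u) (rneg T (h v)) \<le> m" if "v \<in> B" for v
    unfolding m_def using assms(4) that by simp
  obtain v0 where v0: "v0 \<in> B" "m = T (R v0 u) (rneg T (h v0))"
    using m_attained by blast
  then have "R v0 u \<in> {0..1}" "rneg T (h v0) \<in> {0..1}"
    using R h rneg_range[OF T] assms(5,7) by auto
  then have m: "m \<in> {0..1}" "m < rneg T (h u)"
    using tnorm_range[OF T] below v0 by auto
  define l where "l = rneg T m"
  have l: "l \<in> {0..1}"
    unfolding l_def using rneg_range[OF T m(1)] .
  have hu: "h u \<in> {0..1}"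
    using h assms(7) by blast
  have "\<not> l \<le> h u"
    using rneg_le_rneg_iff[OF assms(1) rneg_range[OF T hu] m(1)] rneg_rneg[OF assms(1) hu] m(2)
    unfolding l_def by simp
  then have "h u < l"
    by simp
  show ?thesis
  proof
    show "feasible T U R (\<lambda>w. max (h w) (granule_plus T R l u w))"
      using feasible_max[OF assms(3) feasible_granule_plus[OF T assms(2,7) l]] .
    show "\<forall>w\<in>U. h w \<le> max (h w) (granule_plus T R l u w)"
      by simp
    show "h u < max (h u) (granule_plus T R l u u)"
      using \<open>h u < l\<close> tnorm_one_left[OF T l] R(2) unfolding granule_plus_def by simp
    show "\<forall>v\<in>B. max (h v) (granule_plus T R l u v) = h v"
    proof
      fix v assume "v \<in> B"
      then have v: "R v u \<in> {0..1}" "h v \<in> {0..1}"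
        using R h assms(5,7) by auto
      have "T (R v u) (rneg T (h v)) \<le> rneg T l"
        using m_upper[OF \<open>v \<in> B\<close>] rneg_rneg[OF assms(1) m(1)] unfolding l_def by simp
      then have "T (R v u) l \<le> h v"
        using tnorm_le_iff_rneg[OF assms(1) v(1) l v(2)] by simp
      then show "max (h v) (granule_plus T R l u v) = h v"
        unfolding granule_plus_def by simp
    qed
  qed
qed

lemma vee_type_loss_less:
  assumes "vee_type_loss L" "a \<le> x \<and> x < y \<or> y < x \<and> x \<le> a"
  shows "L a x < L a y"
proof (cases "x = a")
  case True
  \<comment> \<open>the definition gives strict monotonicity only away from a, so pass through the midpoint\<close>
  have "L a ((a + y) / 2) < L a y" "0 \<le> L a ((a + y) / 2)" "L a a = 0"
    using assms True unfolding vee_type_loss_def by auto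
  then show ?thesis
    using True by simp
next
  case False
  then show ?thesis
    using assms unfolding vee_type_loss_def by auto
qed

lemma sum_vee_type_loss_less:
  assumes "finite U" "vee_type_loss L"
    and closer: "\<forall>w\<in>U. c w \<le> g w \<and> g w \<le> h w \<or> h w \<le> g w \<and> g w \<le> c w"
    and "u \<in> U" "g u \<noteq> h u"
  shows "(\<Sum>w\<in>U. L (c w) (g w)) < (\<Sum>w\<in>U. L (c w) (h w))"
proof (rule sum_strict_mono_ex1[OF assms(1)])
  have less: "L (c w) (g w) < L (c w) (h w)" if "w \<in> U" "g w \<noteq> h w" for w
    using closer that by (intro vee_type_loss_less[OF assms(2)]) auto
  then show "\<forall>w\<in>U. L (c w) (g w) \<le> L (c w) (h w)"
    by (metis order_le_less)
  show "\<exists>w\<in>U. L (c w) (g w) < L (c w) (h w)"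
    using less assms(4,5) by blast
qed

lemma optimal_solution_closer_feasible_eq:
  assumes "finite U" "vee_type_loss L" "optimal_solution T U R L A h" "feasible T U R g"
    and "\<forall>w\<in>U. crisp A w \<le> g w \<and> g w \<le> h w \<or> h w \<le> g w \<and> g w \<le> crisp A w"
    and "u \<in> U"
  shows "g u = h u"
  using sum_vee_type_loss_less[OF assms(1,2,5,6)] assms(3,4)
  unfolding optimal_solution_def by force

lemma optimal_solution_tight_at_member:
  assumes "finite U" "IMTL T" "T_preorder T U R" "A \<subseteq> U" "U - A \<noteq> {}"
    and "vee_type_loss L" "optimal_solution T U R L A h" "u \<in> A"
  shows "\<exists>v\<in>U - A. T (R v u) (rneg T (h v)) = rneg T (h u)"
proof (rule ccontr)
  assume no_tight: "\<not> ?thesis"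
  have h: "feasible T U R h"
    using assms(7) unfolding optimal_solution_def by blast
  have "T (R v u) (rneg T (h v)) \<le> rneg T (h u)" if "v \<in> U - A" for v
    using feasible_converse_rneg[OF assms(2,3) h] that assms(4,8) unfolding feasible_def by blast
  then have "\<forall>v\<in>U - A. T (R v u) (rneg T (h v)) < rneg T (h u)"
    using no_tight by (simp add: order_less_le)
  then obtain g where g: "feasible T U R g" "\<forall>w\<in>U. h w \<le> g w" "\<forall>v\<in>U - A. g v = h v" "h u < g u"
    using feasible_raise_outside[OF assms(2,3) h _ _ assms(5)] assms(1,4,8) by blast
  have "\<forall>w\<in>U. crisp A w \<le> g w \<and> g w \<le> h w \<or> h w \<le> g w \<and> g w \<le> crisp A w"
    using g(1-3) unfolding crisp_def feasible_def by auto
  then have "g u = h u"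
    using optimal_solution_closer_feasible_eq[OF assms(1,6,7) g(1)] assms(4,8) by blast
  then show False
    using g(4) by simp
qed

lemma optimal_solution_tight_at_nonmember:
  assumes "finite U" "IMTL T" "T_preorder T U R" "A \<subseteq> U" "A \<noteq> {}"
    and "vee_type_loss L" "optimal_solution T U R L A h" "u \<in> U - A"
  shows "\<exists>v\<in>A. T (R u v) (h v) = h u"
proof (rule ccontr)
  assume no_tight: "\<not> ?thesis"
  have T: "is_tnorm T"
    using assms(2) by (rule IMTL_is_tnorm)
  have h: "feasible T U R h"
    using assms(7) unfolding optimal_solution_def by blast
  have h01: "\<And>w. w \<in> U \<Longrightarrow> h w \<in> {0..1}"
    using h unfolding feasible_def by auto
  have "T (R u v) (h v) \<le> h u" if "v \<in> A" for v
    using h that assms(4,8) unfolding feasible_def by blast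
  then have "\<forall>v\<in>A. T (R u v) (h v) < h u"
    using no_tight by (simp add: order_less_le)
  then have "\<forall>v\<in>A. T (R u v) (rneg T (rneg T (h v))) < rneg T (rneg T (h u))"
    using rneg_rneg[OF assms(2) h01] assms(4,8) by auto
  moreover have "finite A"
    using assms(1,4) by (rule finite_subset[rotated])
  ultimately obtain g where g: "feasible T U (\<lambda>u v. R v u) g" "\<forall>w\<in>U. rneg T (h w) \<le> g w"
      "\<forall>v\<in>A. g v = rneg T (h v)" "rneg T (h u) < g u"
    using feasible_raise_outside[OF assms(2) T_preorder_converse[OF T assms(3)]
        feasible_converse_rneg[OF assms(2,3) h] _ assms(4,5)] assms(8) by blast
  define k where "k = (\<lambda>w. rneg T (g w))"
  have k: "feasible T U R k"
    using feasible_converse_rneg[OF assms(2) T_preorder_converse[OF T assms(3)] g(1)]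
    unfolding k_def by simp
  have g01: "\<And>w. w \<in> U \<Longrightarrow> g w \<in> {0..1}"
    using g(1) unfolding feasible_def by auto
  have "k w \<le> h w" if "w \<in> U" for w
    using g(2) rneg_le_rneg_iff[OF assms(2) rneg_range[OF T h01] g01, of w w] that
    unfolding k_def rneg_rneg[OF assms(2) h01[OF that]] by blast
  moreover have "k v = h v" if "v \<in> A" for v
    using g(3) that assms(4) rneg_rneg[OF assms(2) h01] unfolding k_def by auto
  moreover have "0 \<le> k w" if "w \<in> U" for w
    using k that unfolding feasible_def by blast
  ultimately have "\<forall>w\<in>U. crisp A w \<le> k w \<and> k w \<le> h w \<or> h w \<le> k w \<and> k w \<le> crisp A w"
    unfolding crisp_def by auto
  then have "k u = h u"
    using optimal_solution_closer_feasible_eq[OF assms(1,6,7) k] assms(8) by blast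
  then have "rneg T (h u) = g u"
    using rneg_rneg[OF assms(2) g01] assms(8) unfolding k_def by (metis DiffD1)
  then show False
    using g(4) by simp
qed

lemma adj_minus_to_plus_if_tight:
  assumes "IMTL T" "R v u \<in> {0..1}" "a \<in> {0..1}" "b \<in> {0..1}"
    and "T (R v u) (rneg T a) = rneg T b"
  shows "adj_minus_to_plus T R v (rneg T a) u b"
proof -
  have T: "is_tnorm T"
    using assms(1) by (rule IMTL_is_tnorm)
  have "resid T (rneg T a) (rneg T (R v u)) = rneg T (T (rneg T a) (R v u))"
    using resid_rneg[OF assms(1) rneg_range[OF T assms(3)] assms(2)] .
  also have "\<dots> = b"
    using tnorm_commute[OF T rneg_range[OF T assms(3)] assms(2)] assms(5) rneg_rneg[OF assms(1,4)]
    by simp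
  finally show ?thesis
    unfolding adj_minus_to_plus_def by simp
qed

lemma adj_plus_to_minus_if_tight:
  assumes "IMTL T" "R u v \<in> {0..1}" "a \<in> {0..1}" "T (R u v) a = b"
  shows "adj_plus_to_minus T R v a u (rneg T b)"
proof -
  have T: "is_tnorm T"
    using assms(1) by (rule IMTL_is_tnorm)
  have "resid T a (rneg T (R u v)) = rneg T (T a (R u v))"
    using resid_rneg[OF assms(1,3,2)] .
  then show ?thesis
    unfolding adj_plus_to_minus_def using tnorm_commute[OF T assms(3,2)] assms(4) by simp
qed

theorem proposition7:
  fixes U A :: "'a set" and T L :: "real \<Rightarrow> real \<Rightarrow> real"
    and R :: "'a \<Rightarrow> 'a \<Rightarrow> real" and Ah :: "'a \<Rightarrow> real"
  assumes "finite U"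
    and "IMTL T"
    and "T_preorder T U R"
    and "A \<subseteq> U" and "A \<noteq> {}" and "U - A \<noteq> {}"
    and "vee_type_loss L"
    and "optimal_solution T U R L A Ah"
  shows "(\<forall>u\<in>A. \<exists>v\<in>U - A. adj_minus_to_plus T R v (rneg T (Ah v)) u (Ah u)) \<and>
         (\<forall>u\<in>U - A. \<exists>v\<in>A. adj_plus_to_minus T R v (Ah v) u (rneg T (Ah u)))"
proof -
  have R01: "\<And>u v. u \<in> U \<Longrightarrow> v \<in> U \<Longrightarrow> R u v \<in> {0..1}"
    using assms(3) unfolding T_preorder_def by auto
  have Ah01: "\<And>u. u \<in> U \<Longrightarrow> Ah u \<in> {0..1}"
    using assms(8) unfolding optimal_solution_def feasible_def by auto
  show ?thesis
  proof (intro conjI ballI)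
    fix u
    assume u: "u \<in> A"
    then obtain v where v: "v \<in> U - A" "T (R v u) (rneg T (Ah v)) = rneg T (Ah u)"
      using optimal_solution_tight_at_member[OF assms(1-4,6-8)] by blast
    have "adj_minus_to_plus T R v (rneg T (Ah v)) u (Ah u)"
      using u v assms(4) by (intro adj_minus_to_plus_if_tight[OF assms(2)] R01 Ah01) auto
    with v(1) show "\<exists>v\<in>U - A. adj_minus_to_plus T R v (rneg T (Ah v)) u (Ah u)" ..
  next
    fix u
    assume u: "u \<in> U - A"
    then obtain v where v: "v \<in> A" "T (R u v) (Ah v) = Ah u"
      using optimal_solution_tight_at_nonmember[OF assms(1-5,7,8)] by blast
    have "adj_plus_to_minus T R v (Ah v) u (rneg T (Ah u))"
      using u v assms(4) by (intro adj_plus_to_minus_if_tight[OF assms(2)] R01 Ah01) auto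
    with v(1) show "\<exists>v\<in>A. adj_plus_to_minus T R v (Ah v) u (rneg T (Ah u))" ..
  qed
qed

end
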